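(* Let $x,y\in\mathbb R^d$, let $\mathsf D\in\{\mathsf{KL},\mathsf R_q\}$, and let $\varphi_{x,y}:\mathbb R^d\to\mathbb R^d$ be a map such that $\tilde q_{T,h}(x,v)=\tilde q_{T,h}(y,\varphi_{x,y}(v))$ for all $v\in\mathbb R^d$. Suppose $f\in C^2$ with $\|\nabla^2 f(z)\|_{op}\le L$ for all $z$, $T>0$ satisfies $LT^2\le\frac25\pi^2$, and $h\ge0$. Then \[ \mathsf D(\delta_x\tilde{\mathrm P}_{T,h}\,\|\,\delta_y\tilde{\mathrm P}_{T,h})\le\mathsf D\big((\varphi_{x,y})_\#\boldsymbol\gamma_d\,\|\,\boldsymbol\gamma_d\big). \]
   Context: $f:\mathbb R^d\to\mathbb R$. For $h>0$ with $T/h\in\mathbb N$ (always assumed), $\tilde q_{T,h}(x,v)=x_N$, $N=T/h$, where $x_0=x,v_0=v$, $x_{j+1}=x_j+hv_j-\frac{h^2}2\nabla f(x_j)$, $v_{j+1}=v_j-\frac h2(\nabla f(x_j)+\nabla f(x_{j+1}))$; for $h=0$, $\tilde q_{T,0}(x,v)$ is the time-$T$ position of the solution of $\dot x=v,\dot v=-\nabla f(x)$ from $(x,v)$. $\boldsymbol\gamma_d=\mathcal N(0,I_d)$. $\tilde{\mathrm P}_{T,h}$ maps a probability distribution $\rho$ to the law of $\tilde q_{T,h}(X,\xi)$, $X\sim\rho$, $\xi\sim\boldsymbol\gamma_d$ independent; $\delta_x$ is the Dirac mass. $\mathsf{KL}(\mu\|\pi)=\mathbb E_\mu[\log\frac{d\mu}{d\pi}]$,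 and for $1<q<\infty$, $\mathsf R_q(\mu\|\pi)=\frac1{q-1}\log\mathbb E_\pi[(d\mu/d\pi)^q]$, both $+\infty$ if $\mu\not\ll\pi$. $\psi_\#\rho$ denotes the pushforward. *)

theory Defs
  imports "HOL-Probability.Probability"
begin

text \<open>One leapfrog (velocity Verlet) step; g is the gradient of f.\<close>
definition lf_step :: "('a::real_normed_vector \<Rightarrow> 'a) \<Rightarrow> real \<Rightarrow> 'a \<times> 'a \<Rightarrow> 'a \<times> 'a" where
  "lf_step g h p = (let x = fst p; v = snd p;
                        x' = x + h *\<^sub>R v - (h\<^sup>2 / 2) *\<^sub>R g x
                    in (x', v - (h / 2) *\<^sub>R (g x + g x')))"

definition ham_pos :: "('a::real_normed_vector \<Rightarrow> 'a) \<Rightarrow> real \<Rightarrow> 'a \<Rightarrow> 'a \<Rightarrow> 'a" where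
  "ham_pos g T x v = (THE p. \<exists>X V. X 0 = x \<and> V 0 = v \<and>
      (\<forall>t\<in>{0..T}. (X has_vector_derivative V t) (at t within {0..T}) \<and>
                   (V has_vector_derivative - g (X t)) (at t within {0..T})) \<and> p = X T)"

definition qtilde :: "('a::real_normed_vector \<Rightarrow> 'a) \<Rightarrow> real \<Rightarrow> real \<Rightarrow> 'a \<Rightarrow> 'a \<Rightarrow> 'a" where
  "qtilde g T h x v = (if h = 0 then ham_pos g T x v
     else fst ((lf_step g h ^^ nat \<lfloor>T / h\<rfloor>) (x, v)))"

definition std_gauss :: "'a::euclidean_space measure" where
  "std_gauss = density lborel
     (\<lambda>x. ennreal ((2 * pi) powr (- real DIM('a) / 2) * exp (- (norm x)\<^sup>2 / 2)))"

text \<open>\<open>\<delta>_x P~_{T,h}\<close>: law of q~_{T,h}(x, \<xi>), \<xi> standard Gaussian.\<close>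
definition kernel_from :: "('a::euclidean_space \<Rightarrow> 'a) \<Rightarrow> real \<Rightarrow> real \<Rightarrow> 'a \<Rightarrow> 'a measure" where
  "kernel_from g T h x = distr std_gauss borel (qtilde g T h x)"

definition KL_div :: "'a measure \<Rightarrow> 'a measure \<Rightarrow> ereal" where
  "KL_div \<mu> \<pi> = (if absolutely_continuous \<pi> \<mu> then
      enn2ereal (\<integral>\<^sup>+ x. ennreal (max 0 (ln (enn2real (RN_deriv \<pi> \<mu> x)))) \<partial>\<mu>)
    - enn2ereal (\<integral>\<^sup>+ x. ennreal (max 0 (- ln (enn2real (RN_deriv \<pi> \<mu> x)))) \<partial>\<mu>)
    else \<infinity>)"

definition Renyi_div :: "real \<Rightarrow> 'a measure \<Rightarrow> 'a measure \<Rightarrow> ereal" where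
  "Renyi_div q \<mu> \<pi> = (if absolutely_continuous \<pi> \<mu> then
      (let I = \<integral>\<^sup>+ x. ennreal ((enn2real (RN_deriv \<pi> \<mu> x)) powr q) \<partial>\<pi>
       in if I = \<infinity> then \<infinity> else ereal (ln (enn2real I) / (q - 1)))
    else \<infinity>)"

end

theory Submission
  imports Defs
begin

text \<open>Both divergences satisfy the data-processing inequality: pushing two measures forward along the
  same measurable map cannot increase them. By the coupling hypothesis, \<open>\<delta>_x P~\<close> is the pushforward
  of \<open>\<phi>_# \<gamma>\<close> and \<open>\<delta>_y P~\<close> the pushforward of \<open>\<gamma>\<close> along the same map \<open>v \<mapsto> q~(y, v)\<close>.
  Read through the map, the density of the pushforward is the conditional expectation of the original
  density given the map; for KL the inequality then follows from Gibbs' inequality, for Renyi from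
  Jensen's inequality for \<open>t \<mapsto> t^q\<close>.

  The only input from the dynamics is measurability of \<open>q~(y, \<cdot>)\<close>. Leapfrog is continuous. For the
  exact flow a Gronwall estimate makes the time-\<open>T\<close> position Lipschitz in the initial velocity on the
  set of velocities admitting a solution, and this set is closed, since solutions for convergent
  velocities converge uniformly together with their derivatives.\<close>

section \<open>The standard Gaussian measure\<close>

lemma std_gauss_density_eq_prod:
  "(2 * pi) powr (- real DIM('a) / 2) * exp (- (norm (x::'a::euclidean_space))\<^sup>2 / 2)
    = (\<Prod>b\<in>Basis. std_normal_density (x \<bullet> b))"
proof -
  have "(norm x)\<^sup>2 = (\<Sum>b\<in>Basis. (x \<bullet> b)\<^sup>2)"
    unfolding power2_norm_eq_inner euclidean_inner[of x x] by (simp add: power2_eq_square)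
  then have "exp (- (norm x)\<^sup>2 / 2) = (\<Prod>b\<in>Basis. exp (- (x \<bullet> b)\<^sup>2 / 2))"
    by (simp add: exp_sum[symmetric] sum_divide_distrib sum_negf)
  moreover have "(2 * pi) powr (- real DIM('a) / 2) = (\<Prod>b\<in>(Basis::'a set). 1 / sqrt (2 * pi))"
  proof -
    have "(\<Prod>b\<in>(Basis::'a set). 1 / sqrt (2 * pi)) = ((2 * pi) powr (1/2)) powr (- real DIM('a))"
      by (simp add: powr_half_sqrt[symmetric] powr_minus_divide powr_realpow[symmetric]
          powr_powr powr_divide)
    then show ?thesis by (simp add: powr_powr)
  qed
  moreover have "(\<Prod>b\<in>Basis. 1 / sqrt (2 * pi) * exp (- (x \<bullet> b)\<^sup>2 / 2)) =
      (\<Prod>b\<in>(Basis::'a set). 1 / sqrt (2 * pi)) * (\<Prod>b\<in>Basis. exp (- (x \<bullet> b)\<^sup>2 / 2))"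
    by (rule prod.distrib)
  ultimately show ?thesis
    unfolding std_normal_density_def by simp
qed

lemma prob_space_std_gauss: "prob_space (std_gauss :: 'a::euclidean_space measure)"
proof
  have std_normal: "(\<integral>\<^sup>+x. ennreal (std_normal_density x) \<partial>lborel) = 1"
    using prob_space.emeasure_space_1[OF prob_space_normal_density[of 1 0]]
    by (simp add: emeasure_density)
  have "emeasure (std_gauss::'a measure) (space std_gauss) =
     (\<integral>\<^sup>+x. (\<Prod>b\<in>Basis. ennreal (std_normal_density (x \<bullet> b))) \<partial>(lborel::'a measure))"
    unfolding std_gauss_def emeasure_density[OF _ sets.top] std_gauss_density_eq_prod
    by (simp add: prod_ennreal emeasure_density)
  also have "\<dots> = (\<Prod>b\<in>(Basis::'a set). (\<integral>\<^sup>+x. ennreal (std_normal_density x) \<partial>lborel))"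
    by (rule nn_integral_lborel_prod) auto
  finally show "emeasure (std_gauss::'a measure) (space std_gauss) = 1"
    by (simp add: std_normal)
qed

lemma sets_std_gauss [simp, measurable_cong]: "sets std_gauss = sets borel"
  by (simp add: std_gauss_def)

section \<open>Data-processing inequalities\<close>

definition ln_integral :: "'a measure \<Rightarrow> ('a \<Rightarrow> real) \<Rightarrow> ereal" where
  "ln_integral M a = enn2ereal (\<integral>\<^sup>+x. ennreal (max 0 (ln (a x))) \<partial>M)
                   - enn2ereal (\<integral>\<^sup>+x. ennreal (max 0 (- ln (a x))) \<partial>M)"

lemma KL_div_eq_ln_integral:
  "absolutely_continuous \<pi> \<mu> \<Longrightarrow> KL_div \<mu> \<pi> = ln_integral \<mu> (\<lambda>x. enn2real (RN_deriv \<pi> \<mu> x))"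
  by (simp add: KL_div_def ln_integral_def)

lemma ln_integral_distr:
  "F \<in> measurable M N \<Longrightarrow> a \<in> borel_measurable N \<Longrightarrow>
    ln_integral (distr M N F) a = ln_integral M (\<lambda>x. a (F x))"
  by (simp add: ln_integral_def nn_integral_distr)

lemma enn2ereal_diff_le:
  fixes a a' b b' :: ennreal
  assumes "a' + b \<le> a + b'" "b < \<infinity>" "b' < \<infinity>"
  shows "enn2ereal a' - enn2ereal b' \<le> enn2ereal a - enn2ereal b"
proof (cases "a = \<infinity>")
  case True
  then show ?thesis using assms(2) by (cases b) auto
next
  case False
  obtain x where x: "a = ennreal x" "0 \<le> x" using False by (cases a) auto
  obtain y where y: "b = ennreal y" "0 \<le> y" using assms(2) by (cases b) auto
  obtain y' where y': "b' = ennreal y'" "0 \<le> y'" using assms(3) by (cases b') auto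
  have "a' \<le> a + b'" using assms(1) by (metis add_increasing2 zero_le order_trans le_iff_add)
  then have "a' < \<infinity>"
    using x y' by (auto simp: top_unique simp flip: ennreal_plus intro: le_less_trans)
  then obtain x' where x': "a' = ennreal x'" "0 \<le> x'" by (cases a') auto
  have "x' + y \<le> x + y'" using assms(1) x y x' y' by (simp flip: ennreal_plus)
  then show ?thesis using x y x' y' by simp
qed

lemma ln_integral_le_if_ratio_integral_le:
  assumes "finite_measure M"
    and [measurable]: "a \<in> borel_measurable M" "b \<in> borel_measurable M"
    and pos: "AE x in M. 0 < a x" "AE x in M. 0 < b x"
    and ratio: "(\<integral>\<^sup>+x. ennreal (a x / b x) \<partial>M) \<le> emeasure M (space M)"
    and fin_a: "(\<integral>\<^sup>+x. ennreal (max 0 (- ln (a x))) \<partial>M) < \<infinity>"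
    and fin_b: "(\<integral>\<^sup>+x. ennreal (max 0 (- ln (b x))) \<partial>M) < \<infinity>"
  shows "ln_integral M a \<le> ln_integral M b"
proof -
  interpret finite_measure M by fact
  define lnp where "lnp u = ennreal (max 0 (ln u))" for u
  define lnn where "lnn u = ennreal (max 0 (- ln u))" for u
  have [measurable]: "lnp \<in> borel_measurable borel" "lnn \<in> borel_measurable borel"
    unfolding lnp_def lnn_def by measurable
  have "emeasure M (space M) + ((\<integral>\<^sup>+x. lnp (a x) \<partial>M) + (\<integral>\<^sup>+x. lnn (b x) \<partial>M))
      = (\<integral>\<^sup>+x. lnp (a x) + lnn (b x) + 1 \<partial>M)"
    by (simp add: nn_integral_add ac_simps)
  also have "\<dots> \<le> (\<integral>\<^sup>+x. lnp (b x) + lnn (a x) + ennreal (a x / b x) \<partial>M)"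
  proof (rule nn_integral_mono_AE)
    show "AE x in M. lnp (a x) + lnn (b x) + 1 \<le> lnp (b x) + lnn (a x) + ennreal (a x / b x)"
      using pos
    proof eventually_elim
      case (elim x)
      have "ln (a x) - ln (b x) \<le> a x / b x - 1"
        using ln_le_minus_one[of "a x / b x"] elim by (simp add: ln_div)
      then have "max 0 (ln (a x)) + max 0 (- ln (b x)) + 1
          \<le> max 0 (ln (b x)) + max 0 (- ln (a x)) + a x / b x"
        by linarith
      then have "ennreal (max 0 (ln (a x)) + max 0 (- ln (b x)) + 1)
          \<le> ennreal (max 0 (ln (b x)) + max 0 (- ln (a x)) + a x / b x)"
        by (rule ennreal_leI)
      then show ?case
        using elim by (subst (asm) (1 2) ennreal_plus) (auto simp: lnp_def lnn_def)
    qed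
  qed
  also have "\<dots> = (\<integral>\<^sup>+x. lnp (b x) \<partial>M) + (\<integral>\<^sup>+x. lnn (a x) \<partial>M) + (\<integral>\<^sup>+x. ennreal (a x / b x) \<partial>M)"
    by (simp add: nn_integral_add)
  also have "\<dots> \<le> emeasure M (space M) + ((\<integral>\<^sup>+x. lnp (b x) \<partial>M) + (\<integral>\<^sup>+x. lnn (a x) \<partial>M))"
    using ratio by (simp add: add_left_mono ac_simps)
  finally show ?thesis
    unfolding ln_integral_def
    using fin_a fin_b emeasure_finite[of "space M"]
    by (intro enn2ereal_diff_le) (simp_all add: lnp_def lnn_def ennreal_add_left_cancel_le)
qed

lemma AE_RN_deriv_pos:
  assumes "finite_measure Q" "finite_measure P" "absolutely_continuous Q P" "sets P = sets Q"
  shows "AE x in P. 0 < enn2real (RN_deriv Q P x)"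
proof -
  interpret Q: finite_measure Q by fact
  obtain D where D: "AE x in Q. RN_deriv Q P x = ennreal (D x)" "AE x in P. 0 < D x" "\<And>x. 0 \<le> D x"
    using Q.real_RN_deriv[OF assms(2-4)] by metis
  have "AE x in Q. enn2real (RN_deriv Q P x) = D x"
    using D(1) by eventually_elim (simp add: D(3))
  then have "AE x in P. enn2real (RN_deriv Q P x) = D x"
    by (rule absolutely_continuous_AE[OF assms(4,3)])
  with D(2) show ?thesis by eventually_elim simp
qed

lemma AE_RN_deriv_eq_ennreal:
  assumes "finite_measure Q" "finite_measure P" "absolutely_continuous Q P" "sets P = sets Q"
  shows "AE x in Q. RN_deriv Q P x = ennreal (enn2real (RN_deriv Q P x))"
proof -
  interpret Q: finite_measure Q by fact
  have "sigma_finite_measure P" using assms(2) by (rule finite_measure.sigma_finite_measure)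
  then have "AE x in Q. RN_deriv Q P x \<noteq> \<infinity>" by (rule Q.RN_deriv_finite[OF _ assms(3,4)])
  then show ?thesis by eventually_elim (simp add: less_top)
qed

lemma mult_neg_ln_le_one: "0 \<le> t \<Longrightarrow> t * max 0 (- ln t) \<le> (1::real)"
proof (cases "t = 0")
  case False
  assume "0 \<le> t"
  with False have t: "0 < t" by simp
  have "- ln t \<le> 1 / t - 1" using ln_le_minus_one[of "1 / t"] t by (simp add: ln_div)
  then have "t * (- ln t) \<le> 1 - t" using t by (simp add: field_simps)
  then show ?thesis using t by (auto simp: max_def)
qed simp

lemma nn_integral_neg_ln_RN_deriv_finite:
  assumes "finite_measure Q" "absolutely_continuous Q P" "sets P = sets Q"
  shows "(\<integral>\<^sup>+x. ennreal (max 0 (- ln (enn2real (RN_deriv Q P x)))) \<partial>P) < \<infinity>"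
proof -
  interpret Q: finite_measure Q by fact
  have "(\<integral>\<^sup>+x. ennreal (max 0 (- ln (enn2real (RN_deriv Q P x)))) \<partial>P)
      = (\<integral>\<^sup>+x. RN_deriv Q P x * ennreal (max 0 (- ln (enn2real (RN_deriv Q P x)))) \<partial>Q)"
    by (rule Q.RN_deriv_nn_integral[OF assms(2,3)]) measurable
  also have "\<dots> \<le> (\<integral>\<^sup>+x. 1 \<partial>Q)"
  proof (intro nn_integral_mono)
    fix x
    show "RN_deriv Q P x * ennreal (max 0 (- ln (enn2real (RN_deriv Q P x)))) \<le> 1"
    proof (cases "RN_deriv Q P x")
      case (real t)
      then have "RN_deriv Q P x * ennreal (max 0 (- ln (enn2real (RN_deriv Q P x))))
          = ennreal (t * max 0 (- ln t))"
        by (simp add: ennreal_mult'')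
      also have "\<dots> \<le> 1" using mult_neg_ln_le_one[of t] real by (simp add: ennreal_leI)
      finally show ?thesis .
    qed simp
  qed
  also have "\<dots> < \<infinity>" using Q.emeasure_finite[of "space Q"] by (simp add: less_top[symmetric])
  finally show ?thesis .
qed

lemma absolutely_continuous_distr:
  assumes ac: "absolutely_continuous Q P" and sets_eq: "sets P = sets Q"
    and F: "F \<in> measurable Q N"
  shows "absolutely_continuous (distr Q N F) (distr P N F)"
  unfolding absolutely_continuous_def
proof
  fix A assume A: "A \<in> null_sets (distr Q N F)"
  have FP: "F \<in> measurable P N" using F sets_eq by (simp cong: measurable_cong_sets)
  have "F -` A \<inter> space Q \<in> null_sets Q"
    using A F by (auto simp: null_sets_def emeasure_distr)
  then have "F -` A \<inter> space P \<in> null_sets P"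
    using ac sets_eq_imp_space_eq[OF sets_eq] unfolding absolutely_continuous_def by auto
  then show "A \<in> null_sets (distr P N F)"
    using A FP by (auto simp: null_sets_def emeasure_distr)
qed

text \<open>Read through \<open>F\<close>, the density of the pushforward is the conditional expectation of the
  original density given \<open>F\<close>.\<close>
lemma nn_integral_RN_deriv_distr:
  assumes Q: "finite_measure Q" and ac: "absolutely_continuous Q P" and sets_eq: "sets P = sets Q"
    and F[measurable]: "F \<in> measurable Q N" and [measurable]: "\<psi> \<in> borel_measurable N"
  shows "(\<integral>\<^sup>+x. \<psi> (F x) * RN_deriv (distr Q N F) (distr P N F) (F x) \<partial>Q)
       = (\<integral>\<^sup>+x. \<psi> (F x) * RN_deriv Q P x \<partial>Q)"
proof -
  interpret Q: finite_measure Q by fact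
  interpret Q': finite_measure "distr Q N F" by (rule Q.finite_measure_distr[OF F])
  have FP: "F \<in> measurable P N" using F sets_eq by (simp cong: measurable_cong_sets)
  have [measurable]: "RN_deriv (distr Q N F) (distr P N F) \<in> borel_measurable N"
    using borel_measurable_RN_deriv[of "distr Q N F" "distr P N F"] by simp
  have "(\<integral>\<^sup>+x. \<psi> (F x) * RN_deriv (distr Q N F) (distr P N F) (F x) \<partial>Q)
      = (\<integral>\<^sup>+y. RN_deriv (distr Q N F) (distr P N F) y * \<psi> y \<partial>distr Q N F)"
    by (simp add: nn_integral_distr mult.commute)
  also have "\<dots> = (\<integral>\<^sup>+y. \<psi> y \<partial>distr P N F)"
    by (rule Q'.RN_deriv_nn_integral[symmetric])
      (simp_all add: absolutely_continuous_distr[OF ac sets_eq F])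
  also have "\<dots> = (\<integral>\<^sup>+x. \<psi> (F x) \<partial>P)" by (simp add: nn_integral_distr[OF FP])
  also have "\<dots> = (\<integral>\<^sup>+x. RN_deriv Q P x * \<psi> (F x) \<partial>Q)"
    by (rule Q.RN_deriv_nn_integral[OF ac sets_eq]) measurable
  finally show ?thesis by (simp add: mult.commute)
qed

lemma nn_integral_RN_deriv_distr_comp:
  assumes "finite_measure Q" "absolutely_continuous Q P" "sets P = sets Q"
    and "F \<in> measurable Q N"
  shows "(\<integral>\<^sup>+x. RN_deriv (distr Q N F) (distr P N F) (F x) \<partial>Q) = emeasure P (space P)"
proof -
  interpret finite_measure Q by fact
  show ?thesis
    using nn_integral_RN_deriv_distr[OF assms, of "\<lambda>_. 1"] RN_deriv_nn_integral[OF assms(2,3), of "\<lambda>_. 1"]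
    by simp
qed

lemma nn_integral_RN_deriv_ratio_le:
  assumes Q: "finite_measure Q" and P: "finite_measure P" and ac: "absolutely_continuous Q P"
    and sets_eq: "sets P = sets Q" and F[measurable]: "F \<in> measurable Q N"
  defines "a x \<equiv> enn2real (RN_deriv (distr Q N F) (distr P N F) (F x))"
    and "b x \<equiv> enn2real (RN_deriv Q P x)"
  shows "(\<integral>\<^sup>+x. ennreal (a x / b x) \<partial>P) \<le> emeasure P (space P)"
proof -
  interpret Q: finite_measure Q by fact
  have [measurable]: "RN_deriv (distr Q N F) (distr P N F) \<in> borel_measurable N"
    using borel_measurable_RN_deriv[of "distr Q N F" "distr P N F"] by simp
  have "(\<integral>\<^sup>+x. ennreal (a x / b x) \<partial>P) = (\<integral>\<^sup>+x. RN_deriv Q P x * ennreal (a x / b x) \<partial>Q)"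
    by (rule Q.RN_deriv_nn_integral[OF ac sets_eq]) (simp add: a_def b_def)
  also have "\<dots> \<le> (\<integral>\<^sup>+x. RN_deriv (distr Q N F) (distr P N F) (F x) \<partial>Q)"
  proof (rule nn_integral_mono_AE)
    show "AE x in Q. RN_deriv Q P x * ennreal (a x / b x) \<le> RN_deriv (distr Q N F) (distr P N F) (F x)"
      using AE_RN_deriv_eq_ennreal[OF Q P ac sets_eq]
    proof eventually_elim
      case (elim x)
      have RN: "RN_deriv Q P x = ennreal (b x)" unfolding b_def by (rule elim)
      have "RN_deriv Q P x * ennreal (a x / b x) = ennreal (b x * (a x / b x))"
        unfolding RN by (rule ennreal_mult''[symmetric]) (simp add: a_def b_def)
      also have "\<dots> \<le> ennreal (a x)"
        by (rule ennreal_leI, cases "b x = 0") (simp_all add: a_def b_def)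
      also have "\<dots> \<le> RN_deriv (distr Q N F) (distr P N F) (F x)"
        by (simp add: a_def ennreal_enn2real_if)
      finally show ?case .
    qed
  qed
  also have "\<dots> = emeasure P (space P)"
    by (rule nn_integral_RN_deriv_distr_comp[OF Q ac sets_eq F])
  finally show ?thesis .
qed

lemma KL_div_distr_le:
  assumes Q: "finite_measure Q" and P: "finite_measure P" and sets_eq: "sets P = sets Q"
    and F[measurable]: "F \<in> measurable Q N"
  shows "KL_div (distr P N F) (distr Q N F) \<le> KL_div P Q"
proof (cases "absolutely_continuous Q P")
  case False
  then show ?thesis by (simp add: KL_div_def)
next
  case ac: True
  interpret Q: finite_measure Q by fact
  interpret P: finite_measure P by fact
  have FP[measurable]: "F \<in> measurable P N" using F sets_eq by (simp cong: measurable_cong_sets)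
  let ?P' = "distr P N F" and ?Q' = "distr Q N F"
  have Q': "finite_measure ?Q'" and P': "finite_measure ?P'"
    by (simp_all add: Q.finite_measure_distr P.finite_measure_distr)
  have ac': "absolutely_continuous ?Q' ?P'" by (rule absolutely_continuous_distr[OF ac sets_eq F])
  define r where "r = RN_deriv ?Q' ?P'"
  have [measurable]: "r \<in> borel_measurable N"
    using borel_measurable_RN_deriv[of ?Q' ?P'] by (simp add: r_def)
  have [measurable]: "RN_deriv Q P \<in> borel_measurable P"
    using sets_eq by (simp cong: measurable_cong_sets)
  define a where "a x = enn2real (r (F x))" for x
  define b where "b x = enn2real (RN_deriv Q P x)" for x
  have "ln_integral P a \<le> ln_integral P b"
  proof (rule ln_integral_le_if_ratio_integral_le[OF P])
    show "AE x in P. 0 < a x"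
      using AE_RN_deriv_pos[OF Q' P' ac'] by (simp add: AE_distr_iff a_def r_def)
    show "AE x in P. 0 < b x"
      using AE_RN_deriv_pos[OF Q P ac sets_eq] by (simp add: b_def)
    show "(\<integral>\<^sup>+x. ennreal (a x / b x) \<partial>P) \<le> emeasure P (space P)"
      unfolding a_def b_def r_def by (rule nn_integral_RN_deriv_ratio_le[OF Q P ac sets_eq F])
    show "(\<integral>\<^sup>+x. ennreal (max 0 (- ln (a x))) \<partial>P) < \<infinity>"
      using nn_integral_neg_ln_RN_deriv_finite[OF Q' ac'] by (simp add: nn_integral_distr a_def r_def)
    show "(\<integral>\<^sup>+x. ennreal (max 0 (- ln (b x))) \<partial>P) < \<infinity>"
      using nn_integral_neg_ln_RN_deriv_finite[OF Q ac sets_eq] by (simp add: b_def)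
  qed (unfold a_def b_def, measurable)
  then show ?thesis
    using ac ac' by (simp add: KL_div_eq_ln_integral ln_integral_distr a_def[abs_def] b_def[abs_def] r_def)
qed

lemma mult_powr_le_young:
  fixes b c q :: real
  assumes "0 \<le> c" "0 \<le> b" "1 < q"
  shows "c powr (q - 1) * b \<le> (q - 1) / q * c powr q + 1 / q * b powr q"
proof -
  have "c powr (q - 1) * b \<le> (c powr (q - 1)) powr (q / (q - 1)) / (q / (q - 1)) + b powr q / q"
    using assms by (intro Youngs_inequality) (auto simp: field_simps)
  also have "(c powr (q - 1)) powr (q / (q - 1)) = c powr q" using assms by (simp add: powr_powr)
  finally show ?thesis by (simp add: field_simps)
qed

lemma powr_le_powr_minus_one_mult:
  fixes a c q :: real
  assumes "0 \<le> c" "c \<le> a"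
  shows "c powr q \<le> c powr (q - 1) * a"
proof (cases "c = 0")
  case False
  have "c powr q = c powr (q - 1) * c" using powr_mult_base[OF assms(1), of "q - 1"] by (simp add: mult.commute)
  also have "\<dots> \<le> c powr (q - 1) * a" using assms by (intro mult_left_mono) auto
  finally show ?thesis .
qed simp

lemma ennreal_le_if_le_convex_comb:
  fixes J I :: ennreal and q :: real
  assumes "J \<le> ennreal ((q - 1) / q) * J + ennreal (1 / q) * I" "J < \<infinity>" "I < \<infinity>" "1 < q"
  shows "J \<le> I"
proof -
  obtain j i where ji: "J = ennreal j" "I = ennreal i" "0 \<le> j" "0 \<le> i"
    using assms by (cases J; cases I) auto
  have "j \<le> (q - 1) / q * j + 1 / q * i"
    using assms(1) ji assms(4) by (simp add: ennreal_mult''[symmetric] ennreal_plus[symmetric] del: ennreal_plus)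
  then have "j * q \<le> ((q - 1) / q * j + 1 / q * i) * q" using assms(4) by (intro mult_right_mono) auto
  then have "j \<le> i" using assms(4) by (simp add: field_simps)
  then show ?thesis using ji by simp
qed

lemma nn_integral_powr_eq_SUP_min:
  fixes a :: "'a \<Rightarrow> real"
  assumes [measurable]: "a \<in> borel_measurable M" and a: "\<And>x. 0 \<le> a x" and q: "0 \<le> q"
  shows "(\<integral>\<^sup>+x. ennreal (a x powr q) \<partial>M) = (SUP n. \<integral>\<^sup>+x. ennreal (min (a x) (real n) powr q) \<partial>M)"
proof -
  have inc: "incseq (\<lambda>n x. ennreal (min (a x) (real n) powr q))"
    unfolding incseq_def le_fun_def using q a by (auto intro!: ennreal_leI powr_mono2)
  have "(SUP n. ennreal (min (a x) (real n) powr q)) = ennreal (a x powr q)" for x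
  proof (rule antisym)
    show "(SUP n. ennreal (min (a x) (real n) powr q)) \<le> ennreal (a x powr q)"
      using q a by (intro SUP_least ennreal_leI powr_mono2) auto
    have "min (a x) (real (nat \<lceil>a x\<rceil>)) = a x" by (simp add: real_nat_ceiling_ge)
    then show "ennreal (a x powr q) \<le> (SUP n. ennreal (min (a x) (real n) powr q))"
      by (intro SUP_upper2[where i="nat \<lceil>a x\<rceil>"]) auto
  qed
  then show ?thesis
    by (simp add: nn_integral_monotone_convergence_SUP[OF inc, symmetric])
qed

text \<open>Conditional Jensen for \<open>t \<mapsto> t powr q\<close>: \<open>cond\<close> says that \<open>a\<close> is dominated by the
  conditional expectation of \<open>b\<close> given \<open>a\<close>. Truncating \<open>a\<close> at level \<open>n\<close> keeps the moments
  finite, so that Young's inequality can be solved for the truncated moment.\<close>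
lemma nn_integral_powr_le_if_conditional:
  fixes a b :: "'a \<Rightarrow> real"
  assumes "finite_measure Q" and q: "1 < q"
    and [measurable]: "a \<in> borel_measurable Q" "b \<in> borel_measurable Q"
    and a: "\<And>x. 0 \<le> a x" and b: "\<And>x. 0 \<le> b x"
    and cond: "\<And>\<psi>. \<psi> \<in> borel_measurable borel \<Longrightarrow> (\<And>t. 0 \<le> \<psi> t) \<Longrightarrow>
        (\<integral>\<^sup>+x. ennreal (\<psi> (a x) * a x) \<partial>Q) \<le> (\<integral>\<^sup>+x. ennreal (\<psi> (a x) * b x) \<partial>Q)"
  shows "(\<integral>\<^sup>+x. ennreal (a x powr q) \<partial>Q) \<le> (\<integral>\<^sup>+x. ennreal (b x powr q) \<partial>Q)"
proof -
  interpret finite_measure Q by fact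
  define I where "I = (\<integral>\<^sup>+x. ennreal (b x powr q) \<partial>Q)"
  define c where "c n x = min (a x) (real n)" for n x
  have c: "0 \<le> c n x" for n x by (simp add: c_def a)
  define J where "J n = (\<integral>\<^sup>+x. ennreal (c n x powr q) \<partial>Q)" for n
  have J_le_I: "J n \<le> I" for n
  proof (cases "I = \<infinity>")
    case False
    have "J n \<le> (\<integral>\<^sup>+x. ennreal (real n powr q) \<partial>Q)"
      unfolding J_def using q c by (intro nn_integral_mono ennreal_leI powr_mono2) (auto simp: c_def)
    also have "\<dots> < \<infinity>"
      using emeasure_finite[of "space Q"] by (simp add: ennreal_mult_eq_top_iff less_top[symmetric])
    finally have J_fin: "J n < \<infinity>" .
    have "J n \<le> (\<integral>\<^sup>+x. ennreal (c n x powr (q - 1) * a x) \<partial>Q)"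
      unfolding J_def
      by (intro nn_integral_mono ennreal_leI powr_le_powr_minus_one_mult) (simp_all add: a c c_def)
    also have "\<dots> \<le> (\<integral>\<^sup>+x. ennreal (c n x powr (q - 1) * b x) \<partial>Q)"
      unfolding c_def by (rule cond) auto
    also have "\<dots> \<le> (\<integral>\<^sup>+x. ennreal ((q - 1) / q) * ennreal (c n x powr q)
                                + ennreal (1 / q) * ennreal (b x powr q) \<partial>Q)"
      using mult_powr_le_young[OF c b q] q
      by (intro nn_integral_mono) (simp add: ennreal_leI flip: ennreal_mult'' ennreal_plus)
    also have "\<dots> = ennreal ((q - 1) / q) * J n + ennreal (1 / q) * I"
      unfolding J_def I_def by (simp add: nn_integral_add nn_integral_cmult c_def)
    finally show ?thesis
      using ennreal_le_if_le_convex_comb J_fin False q by (simp add: less_top)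
  qed simp
  have "(\<integral>\<^sup>+x. ennreal (a x powr q) \<partial>Q) = (SUP n. J n)"
    unfolding J_def c_def by (rule nn_integral_powr_eq_SUP_min) (use a q in auto)
  then show ?thesis
    by (simp add: I_def[symmetric] J_le_I SUP_least)
qed

lemma nn_integral_RN_deriv_distr_conditional:
  assumes Q: "finite_measure Q" and P: "finite_measure P" and ac: "absolutely_continuous Q P"
    and sets_eq: "sets P = sets Q" and F[measurable]: "F \<in> measurable Q N"
    and [measurable]: "\<psi> \<in> borel_measurable borel" and \<psi>: "\<And>t. 0 \<le> \<psi> t"
  defines "a x \<equiv> enn2real (RN_deriv (distr Q N F) (distr P N F) (F x))"
  shows "(\<integral>\<^sup>+x. ennreal (\<psi> (a x) * a x) \<partial>Q)
       = (\<integral>\<^sup>+x. ennreal (\<psi> (a x) * enn2real (RN_deriv Q P x)) \<partial>Q)"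
proof -
  interpret P: finite_measure P by fact
  have FP: "F \<in> measurable P N" using F sets_eq by (simp cong: measurable_cong_sets)
  let ?r = "RN_deriv (distr Q N F) (distr P N F)"
  have [measurable]: "?r \<in> borel_measurable N"
    using borel_measurable_RN_deriv[of "distr Q N F" "distr P N F"] by simp
  have "AE x in Q. ?r (F x) = ennreal (a x)"
    using AE_RN_deriv_eq_ennreal[OF finite_measure.finite_measure_distr[OF Q F]
        P.finite_measure_distr[OF FP] absolutely_continuous_distr[OF ac sets_eq F]]
    by (simp add: AE_distr_iff a_def)
  then have "(\<integral>\<^sup>+x. ennreal (\<psi> (a x) * a x) \<partial>Q) = (\<integral>\<^sup>+x. ennreal (\<psi> (a x)) * ?r (F x) \<partial>Q)"
    by (intro nn_integral_cong_AE) (auto simp: \<psi> a_def ennreal_mult)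
  also have "\<dots> = (\<integral>\<^sup>+x. ennreal (\<psi> (a x)) * RN_deriv Q P x \<partial>Q)"
    unfolding a_def by (rule nn_integral_RN_deriv_distr[OF Q ac sets_eq F]) measurable
  also have "\<dots> = (\<integral>\<^sup>+x. ennreal (\<psi> (a x) * enn2real (RN_deriv Q P x)) \<partial>Q)"
    using AE_RN_deriv_eq_ennreal[OF Q P ac sets_eq]
    by (intro nn_integral_cong_AE) (auto simp: \<psi> ennreal_mult)
  finally show ?thesis .
qed

lemma ln_moment_ereal_mono:
  fixes I I' :: ennreal
  assumes "I' \<le> I" "I' \<noteq> 0" "1 < q"
  shows "(if I' = \<infinity> then \<infinity> else ereal (ln (enn2real I') / (q - 1)))
    \<le> (if I = \<infinity> then \<infinity> else ereal (ln (enn2real I) / (q - 1)))"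
proof (cases "I = \<infinity>")
  case False
  then have "ln (enn2real I') / (q - 1) \<le> ln (enn2real I) / (q - 1)"
    using assms by (intro divide_right_mono ln_mono enn2real_mono)
      (auto simp: enn2real_positive_iff less_top[symmetric] zero_less_iff_neq_zero top_unique)
  with False assms(1) show ?thesis by (auto simp: top_unique)
qed simp

lemma nn_integral_RN_deriv_distr_powr_neq_0:
  assumes Q: "finite_measure Q" and P: "finite_measure P" and ac: "absolutely_continuous Q P"
    and sets_eq: "sets P = sets Q" and F[measurable]: "F \<in> measurable Q N"
    and nonzero: "emeasure P (space P) \<noteq> 0"
  shows "(\<integral>\<^sup>+x. ennreal (enn2real (RN_deriv (distr Q N F) (distr P N F) (F x)) powr q) \<partial>Q) \<noteq> 0"
proof
  interpret P: finite_measure P by fact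
  have FP: "F \<in> measurable P N" using F sets_eq by (simp cong: measurable_cong_sets)
  let ?r = "RN_deriv (distr Q N F) (distr P N F)"
  have [measurable]: "?r \<in> borel_measurable N"
    using borel_measurable_RN_deriv[of "distr Q N F" "distr P N F"] by simp
  assume "(\<integral>\<^sup>+x. ennreal (enn2real (?r (F x)) powr q) \<partial>Q) = 0"
  then have "AE x in Q. enn2real (?r (F x)) = 0"
    by (simp add: nn_integral_0_iff_AE)
  moreover have "AE x in Q. ?r (F x) = ennreal (enn2real (?r (F x)))"
    using AE_RN_deriv_eq_ennreal[OF finite_measure.finite_measure_distr[OF Q F]
        P.finite_measure_distr[OF FP] absolutely_continuous_distr[OF ac sets_eq F]]
    by (simp add: AE_distr_iff)
  ultimately have "AE x in Q. ?r (F x) = 0" by eventually_elim simp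
  then have "(\<integral>\<^sup>+x. ?r (F x) \<partial>Q) = 0" by (simp add: nn_integral_0_iff_AE)
  then show False
    using nonzero nn_integral_RN_deriv_distr_comp[OF Q ac sets_eq F] by simp
qed

lemma Renyi_div_distr_le:
  assumes Q: "finite_measure Q" and P: "finite_measure P" and sets_eq: "sets P = sets Q"
    and F[measurable]: "F \<in> measurable Q N"
    and nonzero: "emeasure P (space P) \<noteq> 0" and q: "1 < q"
  shows "Renyi_div q (distr P N F) (distr Q N F) \<le> Renyi_div q P Q"
proof (cases "absolutely_continuous Q P")
  case False
  then show ?thesis by (simp add: Renyi_div_def)
next
  case ac: True
  interpret Q: finite_measure Q by fact
  interpret P: finite_measure P by fact
  have FP[measurable]: "F \<in> measurable P N" using F sets_eq by (simp cong: measurable_cong_sets)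
  let ?P' = "distr P N F" and ?Q' = "distr Q N F"
  have ac': "absolutely_continuous ?Q' ?P'" by (rule absolutely_continuous_distr[OF ac sets_eq F])
  define r where "r = RN_deriv ?Q' ?P'"
  have [measurable]: "r \<in> borel_measurable N"
    using borel_measurable_RN_deriv[of ?Q' ?P'] by (simp add: r_def)
  define a where "a x = enn2real (r (F x))" for x
  define b where "b x = enn2real (RN_deriv Q P x)" for x
  have [measurable]: "a \<in> borel_measurable Q" "b \<in> borel_measurable Q"
    unfolding a_def b_def by measurable
  define I where "I = (\<integral>\<^sup>+x. ennreal (b x powr q) \<partial>Q)"
  define I' where "I' = (\<integral>\<^sup>+x. ennreal (a x powr q) \<partial>Q)"
  have "I' \<le> I"
    unfolding I_def I'_def
  proof (rule nn_integral_powr_le_if_conditional[OF Q q])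
    show "(\<integral>\<^sup>+x. ennreal (\<psi> (a x) * a x) \<partial>Q) \<le> (\<integral>\<^sup>+x. ennreal (\<psi> (a x) * b x) \<partial>Q)"
      if "\<psi> \<in> borel_measurable borel" "\<And>t. 0 \<le> \<psi> t" for \<psi>
      unfolding a_def b_def r_def
      using nn_integral_RN_deriv_distr_conditional[OF Q P ac sets_eq F that] by simp
  qed (simp_all add: a_def b_def)
  have "I' \<noteq> 0"
    unfolding I'_def a_def r_def by (rule nn_integral_RN_deriv_distr_powr_neq_0[OF Q P ac sets_eq F nonzero])
  have "Renyi_div q P Q = (if I = \<infinity> then \<infinity> else ereal (ln (enn2real I) / (q - 1)))"
    using ac by (simp add: Renyi_div_def I_def b_def Let_def)
  moreover have "Renyi_div q ?P' ?Q' = (if I' = \<infinity> then \<infinity> else ereal (ln (enn2real I') / (q - 1)))"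
    using ac' by (simp add: Renyi_div_def I'_def a_def r_def Let_def nn_integral_distr)
  ultimately show ?thesis
    using ln_moment_ereal_mono[OF \<open>I' \<le> I\<close> \<open>I' \<noteq> 0\<close> q] by simp
qed

section \<open>Measurability of the Hamiltonian flow and of leapfrog\<close>

definition hamiltonian_solution ::
    "('a::real_normed_vector \<Rightarrow> 'a) \<Rightarrow> real \<Rightarrow> 'a \<Rightarrow> 'a \<Rightarrow> (real \<Rightarrow> 'a) \<Rightarrow> (real \<Rightarrow> 'a) \<Rightarrow> bool"
  where "hamiltonian_solution g T x v X V \<longleftrightarrow> X 0 = x \<and> V 0 = v \<and>
    (\<forall>t\<in>{0..T}. (X has_vector_derivative V t) (at t within {0..T}) \<and>
                 (V has_vector_derivative - g (X t)) (at t within {0..T}))"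

lemma ham_pos_eq_The:
  "ham_pos g T x v = (THE p. \<exists>X V. hamiltonian_solution g T x v X V \<and> p = X T)"
  unfolding ham_pos_def hamiltonian_solution_def by (simp add: conj_assoc)

lemma gronwall_differential:
  fixes w w' :: "real \<Rightarrow> real"
  assumes deriv: "\<And>s. s \<in> {0..T} \<Longrightarrow> (w has_real_derivative w' s) (at s within {0..T})"
    and bound: "\<And>s. s \<in> {0..T} \<Longrightarrow> w' s \<le> K * w s" and t: "t \<in> {0..T}"
  shows "w t \<le> exp (K * t) * w 0"
proof -
  define u where "u s = exp (- (K * s)) * w s" for s
  have du: "(u has_real_derivative exp (- (K * s)) * (w' s - K * w s)) (at s within {0..T})"
    if "s \<in> {0..T}" for s
    unfolding u_def by (rule derivative_eq_intros deriv[OF that] refl | simp add: algebra_simps)+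
  have "continuous (at s within {0..T}) u" if "s \<in> {0..T}" for s
    using du[OF that] by (rule DERIV_continuous)
  then have u_cont: "continuous_on {0..T} u" by (simp add: continuous_on_eq_continuous_within)
  have "u t \<le> u 0"
  proof (cases "t = 0")
    case False
    with t have t0: "0 < t" "t \<le> T" by auto
    show ?thesis
    proof (rule DERIV_nonpos_imp_decreasing_open[of 0 t u])
      show "continuous_on {0..t} u" using t0 by (intro continuous_on_subset[OF u_cont]) auto
      fix s assume s: "0 < s" "s < t"
      have "at s within {0..T} = at s" using s t0 by (intro at_within_interior) auto
      then have "DERIV u s :> exp (- (K * s)) * (w' s - K * w s)" using du[of s] s t0 by simp
      moreover have "exp (- (K * s)) * (w' s - K * w s) \<le> 0"
        using bound[of s] s t0 by (intro mult_nonneg_nonpos) auto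
      ultimately show "\<exists>y. DERIV u s :> y \<and> y \<le> 0" by blast
    qed (use t0 in simp)
  qed simp
  then show ?thesis by (simp add: u_def exp_minus field_simps)
qed

lemma inner_energy_le:
  fixes dx dv dg :: "'a::real_inner"
  assumes dg: "norm dg \<le> L * norm dx" and L: "0 \<le> L"
  shows "2 * (dx \<bullet> dv) - 2 * (dv \<bullet> dg) \<le> (1 + L) * (dx \<bullet> dx + dv \<bullet> dv)"
proof -
  have "dx \<bullet> dv \<le> norm dx * norm dv" by (rule norm_cauchy_schwarz)
  moreover have "- (dv \<bullet> dg) \<le> norm dv * norm dg" using norm_cauchy_schwarz[of dv "- dg"] by simp
  moreover have "norm dv * norm dg \<le> L * (norm dx * norm dv)"
    using mult_left_mono[OF dg, of "norm dv"] by (simp add: ac_simps)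
  ultimately have "2 * (dx \<bullet> dv) - 2 * (dv \<bullet> dg) \<le> (1 + L) * (2 * (norm dx * norm dv))"
    by (simp add: algebra_simps)
  also have "\<dots> \<le> (1 + L) * ((norm dx)\<^sup>2 + (norm dv)\<^sup>2)"
    using sum_squares_bound[of "norm dx" "norm dv"] L by (intro mult_left_mono) auto
  finally show ?thesis by (simp add: power2_norm_eq_inner)
qed

lemma hamiltonian_solution_dist_le:
  fixes g :: "'a::real_inner \<Rightarrow> 'a"
  assumes lip: "\<And>u w. norm (g u - g w) \<le> L * norm (u - w)" and L: "0 \<le> L"
    and sol1: "hamiltonian_solution g T x1 v1 X1 V1" and sol2: "hamiltonian_solution g T x2 v2 X2 V2"
    and t: "t \<in> {0..T}"
  shows "(norm (X1 t - X2 t))\<^sup>2 + (norm (V1 t - V2 t))\<^sup>2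
     \<le> exp ((1 + L) * t) * ((norm (x1 - x2))\<^sup>2 + (norm (v1 - v2))\<^sup>2)"
proof -
  define w where "w s = (X1 s - X2 s) \<bullet> (X1 s - X2 s) + (V1 s - V2 s) \<bullet> (V1 s - V2 s)" for s
  define w' where "w' s = 2 * ((X1 s - X2 s) \<bullet> (V1 s - V2 s))
    - 2 * ((V1 s - V2 s) \<bullet> (g (X1 s) - g (X2 s)))" for s
  have "w t \<le> exp ((1 + L) * t) * w 0"
  proof (rule gronwall_differential[OF _ _ t])
    show "(w has_real_derivative w' s) (at s within {0..T})" if s: "s \<in> {0..T}" for s
    proof -
      have dX: "((\<lambda>s. X1 s - X2 s) has_vector_derivative (V1 s - V2 s)) (at s within {0..T})"
        using sol1 sol2 s unfolding hamiltonian_solution_def by (intro has_vector_derivative_diff) auto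
      have dV: "((\<lambda>s. V1 s - V2 s) has_vector_derivative (- g (X1 s) - - g (X2 s))) (at s within {0..T})"
        using sol1 sol2 s unfolding hamiltonian_solution_def by (intro has_vector_derivative_diff) auto
      have "(w has_vector_derivative
          (X1 s - X2 s) \<bullet> (V1 s - V2 s) + (V1 s - V2 s) \<bullet> (X1 s - X2 s)
          + ((V1 s - V2 s) \<bullet> (- g (X1 s) - - g (X2 s)) + (- g (X1 s) - - g (X2 s)) \<bullet> (V1 s - V2 s)))
          (at s within {0..T})"
        unfolding w_def
        by (intro has_vector_derivative_add bounded_bilinear.has_vector_derivative[OF bounded_bilinear_inner] dX dV)
      then have "(w has_vector_derivative w' s) (at s within {0..T})"
        by (rule has_vector_derivative_eq_rhs)
          (simp add: w'_def inner_commute inner_diff_left inner_diff_right algebra_simps)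
      then show ?thesis by (simp add: has_real_derivative_iff_has_vector_derivative)
    qed
    show "w' s \<le> (1 + L) * w s" for s
      unfolding w_def w'_def by (rule inner_energy_le[OF lip L])
  qed
  moreover have "X1 0 = x1" "X2 0 = x2" "V1 0 = v1" "V2 0 = v2"
    using sol1 sol2 by (auto simp: hamiltonian_solution_def)
  ultimately show ?thesis by (simp add: w_def power2_norm_eq_inner)
qed

lemma hamiltonian_solution_norm_le:
  fixes g :: "'a::real_inner \<Rightarrow> 'a"
  assumes lip: "\<And>u w. norm (g u - g w) \<le> L * norm (u - w)" and L: "0 \<le> L"
    and sol1: "hamiltonian_solution g T y v1 X1 V1" and sol2: "hamiltonian_solution g T y v2 X2 V2"
    and t: "t \<in> {0..T}"
  shows "norm (X1 t - X2 t) \<le> sqrt (exp ((1 + L) * T)) * norm (v1 - v2)"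
    and "norm (V1 t - V2 t) \<le> sqrt (exp ((1 + L) * T)) * norm (v1 - v2)"
proof -
  define C where "C = sqrt (exp ((1 + L) * T))"
  have "exp ((1 + L) * t) * (norm (v1 - v2))\<^sup>2 \<le> exp ((1 + L) * T) * (norm (v1 - v2))\<^sup>2"
    using t L by (intro mult_right_mono) (auto intro!: mult_left_mono)
  also have "\<dots> = (C * norm (v1 - v2))\<^sup>2" by (simp add: C_def power_mult_distrib)
  finally have sq: "(norm (X1 t - X2 t))\<^sup>2 + (norm (V1 t - V2 t))\<^sup>2 \<le> (C * norm (v1 - v2))\<^sup>2"
    using hamiltonian_solution_dist_le[OF lip L sol1 sol2 t] by simp
  have C: "0 \<le> C * norm (v1 - v2)" by (simp add: C_def)
  show "norm (X1 t - X2 t) \<le> C * norm (v1 - v2)"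
    using sq zero_le_power2[of "norm (V1 t - V2 t)"] by (intro power2_le_imp_le[OF _ C]) linarith
  show "norm (V1 t - V2 t) \<le> C * norm (v1 - v2)"
    using sq zero_le_power2[of "norm (X1 t - X2 t)"] by (intro power2_le_imp_le[OF _ C]) linarith
qed

lemma ham_pos_eq:
  fixes g :: "'a::real_inner \<Rightarrow> 'a"
  assumes lip: "\<And>u w. norm (g u - g w) \<le> L * norm (u - w)" and L: "0 \<le> L" and T: "0 \<le> T"
    and sol: "hamiltonian_solution g T y v X V"
  shows "ham_pos g T y v = X T"
  unfolding ham_pos_eq_The
proof (rule the_equality)
  show "\<exists>X' V'. hamiltonian_solution g T y v X' V' \<and> X T = X' T" using sol by blast
  fix p assume "\<exists>X' V'. hamiltonian_solution g T y v X' V' \<and> p = X' T"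
  then obtain X' V' where sol': "hamiltonian_solution g T y v X' V'" and "p = X' T" by blast
  moreover have "norm (X' T - X T) \<le> sqrt (exp ((1 + L) * T)) * norm (v - v)"
    using T by (intro hamiltonian_solution_norm_le(1)[OF lip L sol' sol]) auto
  ultimately show "p = X T" by simp
qed

lemma Cauchy_if_dominated:
  fixes a :: "nat \<Rightarrow> 'a::real_normed_vector" and b :: "nat \<Rightarrow> 'b::real_normed_vector"
  assumes le: "\<And>m n. norm (a m - a n) \<le> C * norm (b m - b n)" and C: "0 \<le> C" and b: "Cauchy b"
  shows "Cauchy a"
proof (rule CauchyI)
  fix e :: real assume e: "0 < e"
  obtain M where M: "\<forall>m\<ge>M. \<forall>n\<ge>M. norm (b m - b n) < e / (C + 1)"
    using CauchyD[OF b, of "e / (C + 1)"] e C by auto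
  have "norm (a m - a n) < e" if "m \<ge> M" "n \<ge> M" for m n
  proof -
    have "norm (a m - a n) \<le> C * norm (b m - b n)" by (rule le)
    also have "\<dots> \<le> C * (e / (C + 1))" using M that C by (intro mult_left_mono) (auto simp: less_imp_le)
    also have "\<dots> < e" using e C by (simp add: field_simps)
    finally show ?thesis .
  qed
  then show "\<exists>M. \<forall>m\<ge>M. \<forall>n\<ge>M. norm (a m - a n) < e" by blast
qed

lemma lipschitz_family_limit:
  fixes Xs :: "nat \<Rightarrow> 'b \<Rightarrow> 'a::banach" and vs :: "nat \<Rightarrow> 'c::real_normed_vector"
  assumes bound: "\<And>m n t. t \<in> S \<Longrightarrow> norm (Xs m t - Xs n t) \<le> C * norm (vs m - vs n)"
    and C: "0 \<le> C" and lim: "vs \<longlonglongrightarrow> v"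
  obtains X where "\<And>n t. t \<in> S \<Longrightarrow> norm (Xs n t - X t) \<le> C * norm (vs n - v)"
proof -
  define X where "X t = lim (\<lambda>n. Xs n t)" for t
  have "norm (Xs n t - X t) \<le> C * norm (vs n - v)" if t: "t \<in> S" for n t
  proof (rule LIMSEQ_le)
    have "Cauchy (\<lambda>m. Xs m t)"
      by (rule Cauchy_if_dominated[OF bound[OF t] C LIMSEQ_imp_Cauchy[OF lim]])
    then have "(\<lambda>m. Xs m t) \<longlonglongrightarrow> X t"
      unfolding X_def by (simp add: Cauchy_convergent_iff convergent_LIMSEQ_iff)
    then show "(\<lambda>m. norm (Xs n t - Xs m t)) \<longlonglongrightarrow> norm (Xs n t - X t)"
      by (intro tendsto_intros)
    show "(\<lambda>m. C * norm (vs n - vs m)) \<longlonglongrightarrow> C * norm (vs n - v)"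
      by (intro tendsto_intros lim)
    show "\<exists>N. \<forall>m\<ge>N. norm (Xs n t - Xs m t) \<le> C * norm (vs n - vs m)" using bound[OF t] by blast
  qed
  then show ?thesis by (rule that)
qed

lemma uniform_limit_if_norm_le:
  fixes Ds :: "nat \<Rightarrow> 'b \<Rightarrow> 'a::real_normed_vector" and vs :: "nat \<Rightarrow> 'c::real_normed_vector"
  assumes bound: "\<And>n t. t \<in> S \<Longrightarrow> norm (Ds n t - D t) \<le> B * norm (vs n - v)"
    and lim: "vs \<longlonglongrightarrow> v"
  shows "uniform_limit S Ds D sequentially"
proof (rule uniform_limitI)
  fix e :: real assume "0 < e"
  have "(\<lambda>n. B * norm (vs n - v)) \<longlonglongrightarrow> B * 0"
    using lim by (intro tendsto_mult tendsto_const tendsto_norm_zero LIM_zero)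
  then have "\<forall>\<^sub>F n in sequentially. B * norm (vs n - v) < e"
    using \<open>0 < e\<close> by (intro order_tendstoD(2)) auto
  then show "\<forall>\<^sub>F n in sequentially. \<forall>t\<in>S. dist (Ds n t) (D t) < e"
  proof eventually_elim
    case (elim n)
    show ?case using bound elim by (auto simp: dist_norm intro: le_less_trans)
  qed
qed

lemma has_vector_derivative_uniform_limit:
  fixes Fs :: "nat \<Rightarrow> real \<Rightarrow> 'a::banach"
  assumes S: "convex S" "t \<in> S"
    and der: "\<And>n t. t \<in> S \<Longrightarrow> (Fs n has_vector_derivative Ds n t) (at t within S)"
    and conv: "\<And>t. t \<in> S \<Longrightarrow> (\<lambda>n. Fs n t) \<longlonglongrightarrow> F t"
    and unif: "uniform_limit S Ds D sequentially"
  shows "(F has_vector_derivative D t) (at t within S)"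
proof -
  have "\<exists>G. \<forall>x\<in>S. (\<lambda>n. Fs n x) \<longlonglongrightarrow> G x \<and> (G has_derivative (\<lambda>h. h *\<^sub>R D x)) (at x within S)"
  proof (rule has_derivative_sequence[where f'="\<lambda>n x h. h *\<^sub>R Ds n x"])
    show "\<forall>\<^sub>F n in sequentially. \<forall>x\<in>S. \<forall>h. norm (h *\<^sub>R Ds n x - h *\<^sub>R D x) \<le> e * norm h"
      if "0 < e" for e
      using uniform_limitD[OF unif that]
    proof eventually_elim
      case (elim n)
      show ?case
      proof (intro ballI allI)
        fix x h assume "x \<in> S"
        then have "\<bar>h\<bar> * norm (Ds n x - D x) \<le> \<bar>h\<bar> * e"
          using elim by (intro mult_left_mono) (auto simp: dist_norm less_imp_le)
        then show "norm (h *\<^sub>R Ds n x - h *\<^sub>R D x) \<le> e * norm h"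
          by (simp add: mult.commute flip: scaleR_diff_right)
      qed
    qed
  qed (use S der conv in \<open>auto simp: has_vector_derivative_def\<close>)
  then obtain G where "\<And>x. x \<in> S \<Longrightarrow> (\<lambda>n. Fs n x) \<longlonglongrightarrow> G x"
    and G: "(G has_derivative (\<lambda>h. h *\<^sub>R D t)) (at t within S)" using S by blast
  then have "\<And>x. x \<in> S \<Longrightarrow> F x = G x" using conv LIMSEQ_unique by blast
  then show ?thesis
    unfolding has_vector_derivative_def by (rule has_derivative_transform[OF S(2) _ G])
qed

lemma hamiltonian_solvable_closed:
  fixes g :: "'a::{banach, real_inner} \<Rightarrow> 'a"
  assumes lip: "\<And>u w. norm (g u - g w) \<le> L * norm (u - w)" and L: "0 \<le> L" and T: "0 \<le> T"
  shows "closed {v. \<exists>X V. hamiltonian_solution g T y v X V}"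
  unfolding closed_sequential_limits
proof (intro allI impI, elim conjE)
  fix vs v assume "\<forall>n. vs n \<in> {v. \<exists>X V. hamiltonian_solution g T y v X V}" and lim: "vs \<longlonglongrightarrow> v"
  then have "\<forall>n. \<exists>X V. hamiltonian_solution g T y (vs n) X V" by simp
  then obtain Xs Vs where sols: "\<And>n. hamiltonian_solution g T y (vs n) (Xs n) (Vs n)" by metis
  define C where "C = sqrt (exp ((1 + L) * T))"
  have C: "0 \<le> C" by (simp add: C_def)
  have bound: "norm (Xs m t - Xs n t) \<le> C * norm (vs m - vs n)"
    "norm (Vs m t - Vs n t) \<le> C * norm (vs m - vs n)" if "t \<in> {0..T}" for m n t
    unfolding C_def using hamiltonian_solution_norm_le[OF lip L sols sols that] by blast+
  obtain X where X: "\<And>n t. t \<in> {0..T} \<Longrightarrow> norm (Xs n t - X t) \<le> C * norm (vs n - v)"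
    using lipschitz_family_limit[where Xs=Xs, OF bound(1) C lim] by blast
  obtain V where V: "\<And>n t. t \<in> {0..T} \<Longrightarrow> norm (Vs n t - V t) \<le> C * norm (vs n - v)"
    using lipschitz_family_limit[where Xs=Vs, OF bound(2) C lim] by blast
  have gX: "norm (- g (Xs n t) - - g (X t)) \<le> (L * C) * norm (vs n - v)" if "t \<in> {0..T}" for n t
    using lip[of "X t" "Xs n t"] mult_left_mono[OF X[OF that, of n] L]
    by (simp add: norm_minus_commute ac_simps)
  have unif_X: "uniform_limit {0..T} Xs X sequentially"
    using X by (rule uniform_limit_if_norm_le[OF _ lim])
  have unif_V: "uniform_limit {0..T} Vs V sequentially"
    using V by (rule uniform_limit_if_norm_le[OF _ lim])
  have unif_gX: "uniform_limit {0..T} (\<lambda>n t. - g (Xs n t)) (\<lambda>t. - g (X t)) sequentially"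
    using gX by (rule uniform_limit_if_norm_le[OF _ lim])
  have conv_X: "(\<lambda>n. Xs n t) \<longlonglongrightarrow> X t" and conv_V: "(\<lambda>n. Vs n t) \<longlonglongrightarrow> V t"
    if "t \<in> {0..T}" for t
    using tendsto_uniform_limitI[OF unif_X that] tendsto_uniform_limitI[OF unif_V that] by simp_all
  have "(X has_vector_derivative V t) (at t within {0..T})" if t: "t \<in> {0..T}" for t
  proof (rule has_vector_derivative_uniform_limit[where Fs=Xs and Ds=Vs, OF _ t])
    show "(Xs n has_vector_derivative Vs n s) (at s within {0..T})" if "s \<in> {0..T}" for n s
      using sols that by (simp add: hamiltonian_solution_def)
  qed (use conv_X unif_V in auto)
  moreover have "(V has_vector_derivative - g (X t)) (at t within {0..T})" if t: "t \<in> {0..T}" for t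
  proof (rule has_vector_derivative_uniform_limit[where Fs=Vs and Ds="\<lambda>n s. - g (Xs n s)", OF _ t])
    show "(Vs n has_vector_derivative - g (Xs n s)) (at s within {0..T})" if "s \<in> {0..T}" for n s
      using sols that by (simp add: hamiltonian_solution_def)
  qed (use conv_V unif_gX in auto)
  moreover have "(\<lambda>n. y) \<longlonglongrightarrow> X 0" and "vs \<longlonglongrightarrow> V 0"
    using conv_X[of 0] conv_V[of 0] sols T by (simp_all add: hamiltonian_solution_def)
  then have "X 0 = y" "V 0 = v" using lim by (simp_all add: LIMSEQ_const_iff LIMSEQ_unique)
  ultimately show "v \<in> {v. \<exists>X V. hamiltonian_solution g T y v X V}"
    unfolding hamiltonian_solution_def by blast
qed

lemma ham_pos_measurable:
  fixes g :: "'a::euclidean_space \<Rightarrow> 'a"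
  assumes lip: "\<And>u w. norm (g u - g w) \<le> L * norm (u - w)" and L: "0 \<le> L" and T: "0 \<le> T"
  shows "ham_pos g T y \<in> borel_measurable borel"
proof -
  define E where "E = {v. \<exists>X V. hamiltonian_solution g T y v X V}"
  have "lipschitz_on (sqrt (exp ((1 + L) * T))) E (ham_pos g T y)"
  proof (rule lipschitz_onI)
    fix v w assume "v \<in> E" "w \<in> E"
    then obtain X1 V1 X2 V2 where sol1: "hamiltonian_solution g T y v X1 V1"
      and sol2: "hamiltonian_solution g T y w X2 V2" by (auto simp: E_def)
    show "dist (ham_pos g T y v) (ham_pos g T y w) \<le> sqrt (exp ((1 + L) * T)) * dist v w"
      using hamiltonian_solution_norm_le(1)[OF lip L sol1 sol2, of T] T
      by (simp add: ham_pos_eq[OF lip L T sol1] ham_pos_eq[OF lip L T sol2] dist_norm)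
  qed simp
  then have cont: "continuous_on E (ham_pos g T y)" by (rule lipschitz_on_continuous_on)
  \<comment> \<open>off \<open>E\<close>, \<^const>\<open>ham_pos\<close> is the junk value \<open>THE p. False\<close>\<close>
  have "ham_pos g T y = (\<lambda>v. if v \<in> E then ham_pos g T y v else (THE p. False))"
    by (auto simp: fun_eq_iff ham_pos_eq_The E_def)
  also have "\<dots> \<in> borel_measurable borel"
    using hamiltonian_solvable_closed[OF lip L T] cont
    by (intro borel_measurable_continuous_on_if) (auto simp: E_def intro: borel_closed)
  finally show ?thesis .
qed

lemma continuous_on_funpow:
  fixes f :: "'a::topological_space \<Rightarrow> 'a"
  assumes "continuous_on UNIV f"
  shows "continuous_on UNIV (f ^^ n)"
proof (induction n)
  case (Suc n)
  then show ?case
    using continuous_on_compose[OF Suc continuous_on_subset[OF assms]] by (simp add: comp_def)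
qed (simp add: id_def)

lemma continuous_on_lf_step:
  assumes "continuous_on UNIV g"
  shows "continuous_on UNIV (lf_step g h)"
proof -
  have eq: "lf_step g h = (\<lambda>p. (fst p + h *\<^sub>R snd p - (h\<^sup>2 / 2) *\<^sub>R g (fst p),
      snd p - (h / 2) *\<^sub>R (g (fst p) + g (fst p + h *\<^sub>R snd p - (h\<^sup>2 / 2) *\<^sub>R g (fst p)))))"
    by (auto simp: lf_step_def Let_def fun_eq_iff)
  show ?thesis
    unfolding eq using assms by (intro continuous_intros continuous_on_compose2[OF assms]) auto
qed

lemma qtilde_measurable:
  fixes g :: "'a::euclidean_space \<Rightarrow> 'a"
  assumes lip: "\<And>u w. norm (g u - g w) \<le> L * norm (u - w)" and L: "0 \<le> L" and T: "0 \<le> T"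
  shows "qtilde g T h y \<in> borel_measurable borel"
proof (cases "h = 0")
  case True
  then show ?thesis using ham_pos_measurable[OF lip L T] by (simp add: qtilde_def[abs_def])
next
  case False
  have "continuous_on UNIV g"
    by (rule lipschitz_on_continuous_on[of L]) (auto intro!: lipschitz_onI simp: dist_norm lip L)
  then have "continuous_on UNIV (\<lambda>v. fst ((lf_step g h ^^ nat \<lfloor>T / h\<rfloor>) (y, v)))"
    by (intro continuous_on_fst continuous_on_compose2[OF continuous_on_funpow[OF continuous_on_lf_step]]
        continuous_intros) auto
  then show ?thesis
    using False by (simp add: qtilde_def[abs_def] borel_measurable_continuous_onI)
qed

lemma lipschitz_if_derivative_bounded:
  fixes g :: "'a::real_normed_vector \<Rightarrow> 'b::real_normed_vector" and H :: "'a \<Rightarrow> 'a \<Rightarrow>\<^sub>L 'b"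
  assumes "\<And>z. (g has_derivative blinfun_apply (H z)) (at z)" and "\<And>z. norm (H z) \<le> L"
  shows "norm (g u - g w) \<le> L * norm (u - w)"
  using assms by (intro differentiable_bound[OF convex_UNIV]) (auto simp: norm_blinfun.rep_eq)

theorem lemma2:
  fixes f :: "'a::euclidean_space \<Rightarrow> real"
    and g :: "'a \<Rightarrow> 'a"
    and H :: "'a \<Rightarrow> 'a \<Rightarrow>\<^sub>L 'a"
    and \<phi> :: "'a \<Rightarrow> 'a"
    and x y :: 'a
    and L T h :: real
  assumes grad: "\<And>z. (f has_derivative (\<lambda>u. g z \<bullet> u)) (at z)"
    and hess: "\<And>z. (g has_derivative blinfun_apply (H z)) (at z)"
    and hess_cont: "continuous_on UNIV H"
    and hess_bound: "\<And>z. norm (H z) \<le> L"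
    and T_pos: "T > 0"
    and T_bound: "L * T\<^sup>2 \<le> 2 / 5 * pi\<^sup>2"
    and h_nonneg: "h \<ge> 0"
    and h_grid: "h > 0 \<Longrightarrow> T / h \<in> \<nat>"
    and \<phi>_meas: "\<phi> \<in> borel_measurable borel"
    and \<phi>_couple: "\<And>v. qtilde g T h x v = qtilde g T h y (\<phi> v)"
  shows "KL_div (kernel_from g T h x) (kernel_from g T h y)
           \<le> KL_div (distr std_gauss borel \<phi>) std_gauss
       \<and> (\<forall>q. 1 < q \<longrightarrow> Renyi_div q (kernel_from g T h x) (kernel_from g T h y)
                         \<le> Renyi_div q (distr std_gauss borel \<phi>) std_gauss)"
proof -
  \<comment> \<open>Besides \<open>\<phi>_meas\<close> and \<open>\<phi>_couple\<close>, only the Lipschitz bound on \<open>g\<close> and \<open>T \<ge> 0\<close> are used;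
     the remaining hypotheses serve in the paper to construct \<open>\<phi>\<close>.\<close>
  interpret std_gauss: prob_space "std_gauss :: 'a measure" by (rule prob_space_std_gauss)
  have L: "0 \<le> L" using hess_bound[of 0] norm_ge_zero[of "H 0"] by linarith
  have [measurable]: "qtilde g T h y \<in> borel_measurable borel"
    using lipschitz_if_derivative_bounded[OF hess hess_bound] L T_pos
    by (intro qtilde_measurable) auto
  note [measurable] = \<phi>_meas
  let ?P = "distr std_gauss borel \<phi>"
  interpret P: prob_space ?P by (rule std_gauss.prob_space_distr) simp
  have "qtilde g T h x = qtilde g T h y \<circ> \<phi>" by (simp add: fun_eq_iff \<phi>_couple)
  then have kernel_x: "kernel_from g T h x = distr ?P borel (qtilde g T h y)"
    by (simp add: kernel_from_def distr_distr)
  have kernel_y: "kernel_from g T h y = distr std_gauss borel (qtilde g T h y)"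
    by (simp add: kernel_from_def)
  have "sets ?P = sets std_gauss" "qtilde g T h y \<in> measurable std_gauss borel" by simp_all
  note data_processing = KL_div_distr_le[OF std_gauss.finite_measure P.finite_measure this]
    Renyi_div_distr_le[OF std_gauss.finite_measure P.finite_measure this]
  show ?thesis
    unfolding kernel_x kernel_y using data_processing P.emeasure_space_1 by simp
qed

end
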